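(* Let $n\ge d+1\ge 3$ be integers and let $\mathcal{F}\subseteq\binom{[n]}{d+1}$. Suppose that for every $F\in\mathcal{F}$ there exists a subset $B_F\subseteq F$ with $|B_F|=d$ such that $F'\cap F\neq B_F$ for every $F'\in\mathcal{F}$. Then $|\mathcal{F}|\le\binom{n-1}{d}$. Moreover, equality holds if and only if $\mathcal{F}$ is a star of size $\binom{n-1}{d}$, i.e. $\mathcal{F}=\{F\in\binom{[n]}{d+1}: a\in F\}$ for some $a\in[n]$.
   Context: $\binom{[n]}{k}$ denotes the family of all $k$-element subsets of $[n]=\{1,\dots,n\}$. A star is a family all of whose members contain a common element. *)

theory Defs
  imports Main
begin

definition ksubsets :: "nat \<Rightarrow> nat \<Rightarrow> nat set set" where
  "ksubsets n k = {S. S \<subseteq> {1..n} \<and> card S = k}"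

end

theory Submission
  imports Defs
begin

text \<open>
  The map \<open>F \<mapsto> B\<^sub>F\<close> is injective and \<open>B\<^sub>F\<close> lies in no other member of the family.
  Double counting the pairs \<open>(F, H)\<close> with \<open>H\<close> a non-member \<open>(d+1)\<close>-set containing \<open>B\<^sub>F\<close>
  (each \<open>F\<close> has \<open>n - d - 1\<close> such \<open>H\<close>, each \<open>H\<close> at most \<open>d + 1\<close> such \<open>F\<close>) gives the bound.
  In the extremal case every \<open>d\<close>-subset of a non-member lies in the image of \<open>B\<close>, so every
  \<open>(d+1)\<close>-superset of a \<open>d\<close>-set outside the image is a member. For such a free \<open>d\<close>-set \<open>D\<close>
  this forces a pivot \<open>a \<in> D\<close> with \<open>B (D + y) = D - a + y\<close> for all \<open>y \<notin> D\<close>; exchanging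
  elements other than \<open>a\<close> keeps \<open>D\<close> free with the same pivot, so every \<open>d\<close>-set containing
  \<open>a\<close> is free and the family contains, hence equals, the star at \<open>a\<close>.
\<close>

lemma card_Suc_subsetE:
  assumes "finite H" "S \<subseteq> H" "card H = Suc (card S)"
  obtains y where "y \<notin> S" "H = insert y S" "S = H - {y}"
proof -
  have "finite S" using assms(1,2) finite_subset by blast
  then have "card (H - S) = 1" using assms by (simp add: card_Diff_subset)
  then obtain y where y: "H - S = {y}" by (auto simp: card_1_singleton_iff)
  then have "y \<notin> S" "H = insert y S" using assms(2) by auto
  moreover then have "S = H - {y}" by simp
  ultimately show thesis using that by blast
qed

lemma inter_eq_if_common_subset:
  assumes "finite F" "card G = card F" "F \<noteq> G"
    and "B \<subseteq> F" "B \<subseteq> G" "Suc (card B) = card F"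
  shows "G \<inter> F = B"
proof -
  have "finite G" using assms(1,2,6) card.infinite by fastforce
  then have "\<not> F \<subseteq> G" using assms(2,3) card_subset_eq by metis
  then have "card (G \<inter> F) < card F"
    using assms(1) by (intro psubset_card_mono) auto
  then show ?thesis
    using assms(1,4-6) by (intro card_seteq[symmetric]) (auto intro: finite_subset)
qed

lemma card_star:
  assumes "finite X" "a \<in> X"
  shows "card {F. F \<subseteq> X \<and> card F = d + 1 \<and> a \<in> F} = (card X - 1) choose d"
proof -
  let ?S = "{S. S \<subseteq> X - {a} \<and> card S = d}"
  have "{F. F \<subseteq> X \<and> card F = d + 1 \<and> a \<in> F} = insert a ` ?S"
  proof (intro set_eqI iffI)
    fix F assume "F \<in> {F. F \<subseteq> X \<and> card F = d + 1 \<and> a \<in> F}"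
    moreover then have "finite F" using assms(1) finite_subset by blast
    ultimately show "F \<in> insert a ` ?S" by (intro image_eqI[of _ _ "F - {a}"]) auto
  next
    fix F assume "F \<in> insert a ` ?S"
    then obtain S where "S \<subseteq> X - {a}" "card S = d" "F = insert a S" by blast
    moreover then have "finite S" "a \<notin> S" using assms(1) finite_subset by blast+
    ultimately show "F \<in> {F. F \<subseteq> X \<and> card F = d + 1 \<and> a \<in> F}" using assms(2) by auto
  qed
  moreover have "inj_on (insert a) ?S" by (rule inj_onI) blast
  ultimately have "card {F. F \<subseteq> X \<and> card F = d + 1 \<and> a \<in> F} = card ?S"
    by (simp add: card_image)
  also have "\<dots> = (card X - 1) choose d" using n_subsets[of "X - {a}" d] assms by simp
  finally show ?thesis .
qed

locale private_family =
  fixes X :: "'a set" and d :: nat and \<F> :: "'a set set" and B :: "'a set \<Rightarrow> 'a set"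
  assumes finite_ground: "finite X"
    and family_layer: "F \<in> \<F> \<Longrightarrow> F \<subseteq> X \<and> card F = d + 1"
    and private_subset: "F \<in> \<F> \<Longrightarrow> B F \<subseteq> F \<and> card (B F) = d"
    and private_unique: "F \<in> \<F> \<Longrightarrow> G \<in> \<F> \<Longrightarrow> B F \<subseteq> G \<Longrightarrow> G = F"
begin

abbreviation layer :: "nat \<Rightarrow> 'a set set" where
  "layer k \<equiv> {S. S \<subseteq> X \<and> card S = k}"

lemma finite_layer: "finite (layer k)"
  using finite_ground by simp

lemma card_layer: "card (layer k) = card X choose k"
  using n_subsets[OF finite_ground] by simp

lemma family_subset_layer: "\<F> \<subseteq> layer (d + 1)"
  using family_layer by blast

lemma finite_family: "finite \<F>"
  using finite_subset[OF family_subset_layer finite_layer] .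

lemma finite_member: "S \<subseteq> X \<Longrightarrow> finite S"
  using finite_ground finite_subset by blast

lemma inj_on_private: "inj_on B \<F>"
  using private_unique private_subset by (metis inj_onI order_refl)

lemma card_nonmember_supersets_of_private:
  assumes F: "F \<in> \<F>"
  shows "card {H \<in> layer (d + 1) - \<F>. B F \<subseteq> H} = card X - (d + 1)"
proof -
  have FX: "F \<subseteq> X" and cF: "card F = d + 1" and BF: "B F \<subseteq> F" and cB: "card (B F) = d"
    using family_layer[OF F] private_subset[OF F] by auto
  have finB: "finite (B F)" using BF FX finite_member by blast
  have "{H \<in> layer (d + 1) - \<F>. B F \<subseteq> H} = (\<lambda>y. insert y (B F)) ` (X - F)"
  proof (intro set_eqI iffI)
    fix H assume H: "H \<in> {H \<in> layer (d + 1) - \<F>. B F \<subseteq> H}"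
    then have HX: "H \<subseteq> X" and cH: "card H = Suc (card (B F))" and BH: "B F \<subseteq> H"
      using cB by auto
    obtain y where Hy: "H = insert y (B F)"
      using card_Suc_subsetE[OF finite_member[OF HX] BH cH] by blast
    then have yX: "y \<in> X" using HX by blast
    have "y \<notin> F"
    proof
      assume "y \<in> F"
      then have "H \<subseteq> F" using Hy BF by blast
      then have "H = F" using cH cB cF card_subset_eq[OF finite_member[OF FX]] by auto
      then show False using H F by blast
    qed
    then show "H \<in> (\<lambda>y. insert y (B F)) ` (X - F)" using Hy yX by blast
  next
    fix H assume "H \<in> (\<lambda>y. insert y (B F)) ` (X - F)"
    then obtain y where y: "y \<in> X - F" and H: "H = insert y (B F)" by blast
    have "H \<notin> \<F>" using private_unique[OF F] H y by blast
    moreover have "y \<notin> B F" using y BF by blast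
    moreover have "H \<subseteq> X" using H y BF FX by blast
    ultimately show "H \<in> {H \<in> layer (d + 1) - \<F>. B F \<subseteq> H}"
      using H cB finB by (simp add: subset_insertI)
  qed
  moreover have "inj_on (\<lambda>y. insert y (B F)) (X - F)"
    using BF by (intro inj_onI) blast
  ultimately have "card {H \<in> layer (d + 1) - \<F>. B F \<subseteq> H} = card (X - F)"
    by (simp add: card_image)
  also have "\<dots> = card X - (d + 1)" using card_Diff_subset[OF finite_member[OF FX] FX] cF by simp
  finally show ?thesis .
qed

lemma private_image_covering:
  assumes "H \<in> layer (d + 1)"
  shows "card (B ` {F \<in> \<F>. B F \<subseteq> H}) = card {F \<in> \<F>. B F \<subseteq> H}"
    and "B ` {F \<in> \<F>. B F \<subseteq> H} \<subseteq> {D. D \<subseteq> H \<and> card D = d}"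
    and "card {D. D \<subseteq> H \<and> card D = d} = d + 1"
proof -
  show "card (B ` {F \<in> \<F>. B F \<subseteq> H}) = card {F \<in> \<F>. B F \<subseteq> H}"
    by (rule card_image, rule inj_on_subset[OF inj_on_private]) blast
  show "B ` {F \<in> \<F>. B F \<subseteq> H} \<subseteq> {D. D \<subseteq> H \<and> card D = d}"
    using private_subset by blast
  show "card {D. D \<subseteq> H \<and> card D = d} = d + 1"
    using n_subsets[of H d] finite_member assms by simp
qed

lemma card_covering_le:
  assumes "H \<in> layer (d + 1)"
  shows "card {F \<in> \<F>. B F \<subseteq> H} \<le> d + 1"
proof -
  have "finite {D. D \<subseteq> H \<and> card D = d}" using finite_member assms by simp
  then have "card (B ` {F \<in> \<F>. B F \<subseteq> H}) \<le> card {D. D \<subseteq> H \<and> card D = d}"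
    using private_image_covering(2)[OF assms] by (rule card_mono)
  then show ?thesis using private_image_covering(1,3)[OF assms] by simp
qed

lemma private_if_covering_full:
  assumes "H \<in> layer (d + 1)" "card {F \<in> \<F>. B F \<subseteq> H} = d + 1"
    and "D \<subseteq> H" "card D = d"
  shows "D \<in> B ` \<F>"
proof -
  have "B ` {F \<in> \<F>. B F \<subseteq> H} = {D. D \<subseteq> H \<and> card D = d}"
  proof (rule card_subset_eq)
    show "finite {D. D \<subseteq> H \<and> card D = d}" using finite_member assms(1) by simp
  qed (use private_image_covering[OF assms(1)] assms(2) in auto)
  then show ?thesis using assms(3,4) by blast
qed

lemma double_counting:
  "(card X - (d + 1)) * card \<F> = (\<Sum>H \<in> layer (d + 1) - \<F>. card {F \<in> \<F>. B F \<subseteq> H})"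
proof -
  let ?N = "layer (d + 1) - \<F>"
  have "(card X - (d + 1)) * card \<F> = (\<Sum>F\<in>\<F>. card {H \<in> ?N. B F \<subseteq> H})"
    using card_nonmember_supersets_of_private by simp
  also have "\<dots> = (\<Sum>H\<in>?N. card {F \<in> \<F>. B F \<subseteq> H})"
    using sum.swap_restrict[OF finite_family, of ?N "\<lambda>_ _. 1::nat" "\<lambda>F H. B F \<subseteq> H"]
      finite_layer by simp
  finally show ?thesis .
qed

lemma deficiency_identity:
  assumes "d + 1 \<le> card X"
  shows "card X * ((card X - 1) choose d) = card X * card \<F>
    + (\<Sum>H \<in> layer (d + 1) - \<F>. d + 1 - card {F \<in> \<F>. B F \<subseteq> H})"
proof -
  let ?N = "layer (d + 1) - \<F>" and ?g = "\<lambda>H. card {F \<in> \<F>. B F \<subseteq> H}"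
  define n where "n = card X"
  define m where "m = card \<F>"
  have n_split: "n * m = (n - (d + 1)) * m + (d + 1) * m"
    using assms by (metis add_mult_distrib le_add_diff_inverse2 n_def)
  have "n * ((n - 1) choose d) = (d + 1) * (n choose (d + 1))"
    using Suc_times_binomial[of d "n - 1"] assms by (simp add: n_def)
  also have "\<dots> = (d + 1) * card ?N + (d + 1) * m"
    using card_Diff_subset[OF finite_family family_subset_layer] card_layer
      card_mono[OF finite_layer family_subset_layer]
    by (simp add: n_def m_def flip: add_mult_distrib2)
  also have "(d + 1) * card ?N = (\<Sum>H\<in>?N. d + 1 - ?g H) + (\<Sum>H\<in>?N. ?g H)"
    using card_covering_le by (simp flip: sum.distrib)
  also have "\<dots> + (d + 1) * m = (\<Sum>H\<in>?N. d + 1 - ?g H) + n * m"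
    using double_counting n_split by (simp add: n_def m_def)
  finally show ?thesis by (simp add: n_def m_def)
qed

lemma card_family_le:
  assumes "d + 1 \<le> card X"
  shows "card \<F> \<le> (card X - 1) choose d"
proof -
  have "card X * card \<F> \<le> card X * ((card X - 1) choose d)"
    using deficiency_identity[OF assms] by linarith
  then show ?thesis using assms by simp
qed

lemma private_if_extremal:
  assumes "d + 1 \<le> card X" "card \<F> = (card X - 1) choose d"
    and "H \<in> layer (d + 1) - \<F>" "D \<subseteq> H" "card D = d"
  shows "D \<in> B ` \<F>"
proof -
  have "(\<Sum>H \<in> layer (d + 1) - \<F>. d + 1 - card {F \<in> \<F>. B F \<subseteq> H}) = 0"
    using deficiency_identity[OF assms(1)] assms(2) by simp
  then have "d + 1 \<le> card {F \<in> \<F>. B F \<subseteq> H}"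
    using assms(3) finite_layer by simp
  then have "card {F \<in> \<F>. B F \<subseteq> H} = d + 1"
    using card_covering_le assms(3) by (intro antisym) auto
  then show ?thesis
    using private_if_covering_full assms(3-5) by blast
qed

definition free :: "'a set \<Rightarrow> bool" where
  "free D \<longleftrightarrow> D \<subseteq> X \<and> card D = d \<and> D \<notin> B ` \<F>"

definition pivot :: "'a set \<Rightarrow> 'a \<Rightarrow> bool" where
  "pivot D a \<longleftrightarrow> a \<in> D \<and> (\<forall>y \<in> X - D. B (insert y D) = insert y (D - {a}))"

lemma exists_free:
  assumes "1 \<le> d" "d + 1 \<le> card X"
  shows "\<exists>D. free D"
proof -
  have "card (B ` \<F>) \<le> (card X - 1) choose d"
    using card_family_le[OF assms(2)] card_image[OF inj_on_private] by simp
  also have "\<dots> < card X choose d"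
    using binomial_Suc_Suc[of "card X - 1" "d - 1"] assms zero_less_binomial[of "d - 1" "card X - 1"]
    by (simp add: Suc_diff_le)
  finally have "card (B ` \<F>) < card (layer d)" using card_layer by simp
  then have "\<not> layer d \<subseteq> B ` \<F>"
    using card_mono[OF finite_imageI[OF finite_family]] by (auto simp: not_le[symmetric])
  then show ?thesis unfolding free_def by blast
qed

end

locale extremal_private_family = private_family +
  assumes large_ground: "d + 2 \<le> card X"
    and extremal: "card \<F> = (card X - 1) choose d"
begin

lemma superset_of_free_mem:
  assumes "free D" "H \<in> layer (d + 1)" "D \<subseteq> H"
  shows "H \<in> \<F>"
proof (rule ccontr)
  assume "H \<notin> \<F>"
  moreover have "d + 1 \<le> card X" using large_ground by simp
  ultimately have "D \<in> B ` \<F>"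
    using private_if_extremal[OF _ extremal] assms(1-3) unfolding free_def by blast
  then show False using assms(1) unfolding free_def by blast
qed

lemma insert_free_mem:
  assumes "free D" "y \<in> X - D"
  shows "insert y D \<in> \<F>"
proof (rule superset_of_free_mem[OF assms(1)])
  have "finite D" "y \<notin> D" "card D = d" "D \<subseteq> X" using assms finite_member unfolding free_def by auto
  then show "insert y D \<in> layer (d + 1)" using assms(2) by simp
qed auto

lemma private_of_insert_free:
  assumes "free D" "y \<in> X - D"
  shows "\<exists>a \<in> D. B (insert y D) = insert y (D - {a})"
proof -
  have D: "D \<subseteq> X" "card D = d" "finite D" using assms(1) finite_member unfolding free_def by auto
  have "card (X - D) \<ge> 2" using card_Diff_subset[OF D(3,1)] D(2) large_ground by simp
  then have "0 < card (X - D - {y})" using assms(2) by (simp add: card_Diff_singleton)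
  then obtain z where z: "z \<in> X - D" "z \<noteq> y" by (auto simp: card_gt_0_iff)
  have mem: "insert y D \<in> \<F>" using insert_free_mem[OF assms] .
  have not_D: "B (insert y D) \<noteq> D"
  proof
    assume "B (insert y D) = D"
    then have "insert z D = insert y D"
      using private_unique[OF mem insert_free_mem[OF assms(1) z(1)]] by blast
    then show False using z assms(2) by blast
  qed
  have "card (insert y D) = Suc (card (B (insert y D)))"
    using private_subset[OF mem] family_layer[OF mem] by simp
  then obtain a where a: "a \<notin> B (insert y D)" "insert y D = insert a (B (insert y D))"
    "B (insert y D) = insert y D - {a}"
    using card_Suc_subsetE[OF finite_member private_subset[THEN conjunct1, OF mem]]
      family_layer[OF mem] by blast
  then have "a \<noteq> y" using not_D assms(2) by auto
  then show ?thesis using a by blast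
qed

text \<open>The set \<open>insert z (B (insert y D))\<close> is a non-member, so its \<open>d\<close>-subset
  \<open>insert z (D - {a})\<close> is private, necessarily to \<open>insert z D\<close>.\<close>
lemma private_of_insert_free_shift:
  assumes "free D" "y \<in> X - D" "z \<in> X - D" "a \<in> D"
    and y_private: "B (insert y D) = insert y (D - {a})"
  shows "B (insert z D) = insert z (D - {a})"
proof (cases "z = y")
  case False
  have D: "D \<subseteq> X" "card D = d" "finite D" using assms(1) finite_member unfolding free_def by auto
  have "0 < card D" using D(3) assms(4) card_gt_0_iff by blast
  let ?N = "insert z (insert y (D - {a}))"
  have mem: "insert y D \<in> \<F>" using insert_free_mem[OF assms(1,2)] .
  have "?N \<notin> \<F>" using private_unique[OF mem] y_private False assms(3) by blast
  moreover have "?N \<in> layer (d + 1)"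
    using D assms(2-4) False \<open>0 < card D\<close> by (auto simp: card_Diff_singleton)
  ultimately have N: "?N \<in> layer (d + 1) - \<F>" by blast
  have card_z: "card (insert z (D - {a})) = d"
    using D assms(3,4) \<open>0 < card D\<close> by (auto simp: card_Diff_singleton)
  have "d + 1 \<le> card X" using large_ground by simp
  from private_if_extremal[OF this extremal N _ card_z]
  have "insert z (D - {a}) \<in> B ` \<F>" by blast
  then obtain F where F: "F \<in> \<F>" "B F = insert z (D - {a})" by blast
  then have "insert z D = F" using private_unique[OF F(1) insert_free_mem[OF assms(1,3)]] by blast
  then show ?thesis using F(2) by simp
qed (use y_private in simp)

lemma free_has_pivot:
  assumes "free D"
  shows "\<exists>a. pivot D a"
proof -
  have "D \<subseteq> X" "card D = d" using assms unfolding free_def by auto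
  then have "X - D \<noteq> {}" using large_ground card_mono[OF finite_ground] by fastforce
  then obtain y where "y \<in> X - D" by blast
  then obtain a where "a \<in> D" "B (insert y D) = insert y (D - {a})"
    using private_of_insert_free[OF assms] by blast
  then show ?thesis
    using private_of_insert_free_shift[OF assms \<open>y \<in> X - D\<close>] unfolding pivot_def by blast
qed

lemma exchange_preserves_free_pivot:
  assumes "free D" "pivot D a" "u \<in> D" "u \<noteq> a" "y \<in> X - D"
  shows "free (insert y (D - {u})) \<and> pivot (insert y (D - {u})) a"
proof -
  let ?D' = "insert y (D - {u})"
  have D: "D \<subseteq> X" "card D = d" "finite D" using assms(1) finite_member unfolding free_def by auto
  have a: "a \<in> D" and y_private: "B (insert y D) = insert y (D - {a})"
    using assms(2,5) unfolding pivot_def by blast+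
  have "?D' \<notin> B ` \<F>"
  proof
    assume "?D' \<in> B ` \<F>"
    then obtain F where F: "F \<in> \<F>" "B F = ?D'" by blast
    then have "insert y D = F"
      using private_unique[OF F(1) insert_free_mem[OF assms(1,5)]] by blast
    then have "insert y (D - {u}) = insert y (D - {a})" using F(2) y_private by simp
    moreover have "a \<in> insert y (D - {u})" using a assms(4) by blast
    ultimately show False using a assms(5) by auto
  qed
  moreover have "0 < card D" using D(3) assms(3) card_gt_0_iff by blast
  ultimately have free': "free ?D'"
    using D assms(3,5) unfolding free_def by (auto simp: card_Diff_singleton)
  then obtain a' where a': "pivot ?D' a'" using free_has_pivot by blast
  have "insert u ?D' = insert y D" "u \<in> X - ?D'" using assms(3,5) D(1) by auto
  moreover have "B (insert u ?D') = insert u (?D' - {a'})"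
    using a' \<open>u \<in> X - ?D'\<close> unfolding pivot_def by blast
  ultimately have shifted: "insert u (?D' - {a'}) = insert y (D - {a})" using y_private by simp
  have "a' = a"
  proof (rule ccontr)
    assume "a' \<noteq> a"
    then have "a \<in> insert u (?D' - {a'})" using a assms(4) by blast
    then show False using shifted a assms(5) by auto
  qed
  then show ?thesis using free' a' by simp
qed

lemma free_if_contains_pivot:
  assumes "free D" "pivot D a" "E \<in> layer d" "a \<in> E"
  shows "free E"
  using assms(1,2)
proof (induction "card (D - E)" arbitrary: D rule: less_induct)
  case less
  have D: "D \<subseteq> X" "card D = d" "finite D" using less.prems(1) finite_member unfolding free_def by auto
  show ?case
  proof (cases "D \<subseteq> E")
    case True
    then have "D = E" using card_subset_eq[OF finite_member] D(2) assms(3) by auto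
    then show ?thesis using less.prems(1) by simp
  next
    case False
    then obtain u where u: "u \<in> D" "u \<notin> E" by blast
    have "\<not> E \<subseteq> D" using card_subset_eq[OF D(3)] D(2) assms(3) u by auto
    then obtain y where y: "y \<in> E" "y \<notin> D" by blast
    let ?D' = "insert y (D - {u})"
    have "free ?D' \<and> pivot ?D' a"
      using exchange_preserves_free_pivot[OF less.prems u(1)] u assms(3,4) y by blast
    moreover have "card (?D' - E) < card (D - E)"
    proof -
      have "?D' - E = D - E - {u}" using y by blast
      moreover have "card (D - E - {u}) < card (D - E)" using u D(3) by (intro card_Diff1_less) auto
      ultimately show ?thesis by simp
    qed
    ultimately show ?thesis using less.hyps by blast
  qed
qed

lemma star_subset_family:
  assumes "1 \<le> d"
  shows "\<exists>a \<in> X. {F \<in> layer (d + 1). a \<in> F} \<subseteq> \<F>"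
proof -
  obtain D where D: "free D" using exists_free assms large_ground by fastforce
  then obtain a where a: "pivot D a" using free_has_pivot by blast
  then have "a \<in> X" using D unfolding free_def pivot_def by blast
  moreover have "H \<in> \<F>" if H: "H \<in> layer (d + 1)" "a \<in> H" for H
  proof -
    have "card (H - {a}) = d" using H finite_member by auto
    then have "H - {a} \<noteq> {}" using assms by (metis card.empty not_one_le_zero)
    then obtain h where h: "h \<in> H" "h \<noteq> a" by blast
    have "H - {h} \<in> layer d" using H h finite_member by auto
    then have "free (H - {h})" using free_if_contains_pivot[OF D a] H(2) h(2) by blast
    then show ?thesis using superset_of_free_mem H(1) by blast
  qed
  ultimately show ?thesis by blast
qed

end

lemma (in private_family) extremal_family_eq_star:
  assumes "1 \<le> d" "d + 1 \<le> card X" "card \<F> = (card X - 1) choose d"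
  shows "\<exists>a \<in> X. \<F> = {F \<in> layer (d + 1). a \<in> F}"
proof (cases "card X = d + 1")
  case True
  then have top: "layer (d + 1) = {X}" using card_subset_eq[OF finite_ground] by auto
  moreover have "\<F> \<noteq> {}" using assms(3) True by auto
  moreover have "\<F> \<subseteq> {X}" using family_subset_layer top by simp
  ultimately have "\<F> = {X}" by (simp add: subset_singleton_iff)
  moreover have "X \<noteq> {}" using True by auto
  ultimately show ?thesis using top by auto
next
  case False
  then interpret extremal_private_family X d \<F> B
    using assms(2,3) by (intro extremal_private_family.intro private_family_axioms
        extremal_private_family_axioms.intro) simp_all
  obtain a where a: "a \<in> X" "{F \<in> layer (d + 1). a \<in> F} \<subseteq> \<F>"
    using star_subset_family assms(1) by blast
  have "card {F \<in> layer (d + 1). a \<in> F} = card \<F>"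
    using card_star[OF finite_ground a(1)] assms(3) by simp
  then have "{F \<in> layer (d + 1). a \<in> F} = \<F>" using card_subset_eq[OF finite_family a(2)] by simp
  then show ?thesis using a(1) by blast
qed

theorem theorem5p1:
  fixes n d :: nat and \<F> :: "nat set set"
  assumes "d + 1 \<ge> 3" and "n \<ge> d + 1"
    and "\<F> \<subseteq> ksubsets n (d + 1)"
    and "\<forall>F\<in>\<F>. \<exists>B. B \<subseteq> F \<and> card B = d \<and> (\<forall>F'\<in>\<F>. F' \<inter> F \<noteq> B)"
  shows "card \<F> \<le> (n - 1) choose d
    \<and> (card \<F> = (n - 1) choose d \<longleftrightarrow>
         (\<exists>a\<in>{1..n}. \<F> = {F \<in> ksubsets n (d + 1). a \<in> F}))"
proof -
  obtain B where B: "\<forall>F\<in>\<F>. B F \<subseteq> F \<and> card (B F) = d \<and> (\<forall>F'\<in>\<F>. F' \<inter> F \<noteq> B F)"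
    using assms(4) by metis
  have members: "F \<subseteq> {1..n} \<and> card F = d + 1" if "F \<in> \<F>" for F
    using assms(3) that unfolding ksubsets_def by blast
  interpret private_family "{1..n}" d \<F> B
  proof
    fix F G assume F: "F \<in> \<F>" and G: "G \<in> \<F>" and "B F \<subseteq> G"
    show "G = F"
    proof (rule ccontr)
      assume "G \<noteq> F"
      moreover have "finite F" using members[OF F] finite_subset by blast
      ultimately have "G \<inter> F = B F"
        using inter_eq_if_common_subset[of F G "B F"] members[OF F] members[OF G] B F \<open>B F \<subseteq> G\<close>
        by simp
      then show False using B F G by blast
    qed
  qed (use members B in auto)
  have "card \<F> \<le> (n - 1) choose d" using card_family_le assms(2) by simp
  moreover have "card \<F> = (n - 1) choose d \<longleftrightarrow> (\<exists>a \<in> {1..n}. \<F> = {F \<in> layer (d + 1). a \<in> F})"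
    using extremal_family_eq_star card_star[OF finite_ground] assms(1,2) by auto
  ultimately show ?thesis unfolding ksubsets_def by simp
qed

end
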